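(* Let $\mathcal{L}$ be a subspace of $\ell^2(G)$ containing $\mathcal{K}(G)$, and let $\|\cdot\|'$ be a norm on $\mathcal{L}$ such that $\|\,|f|\,\|' = \|f\|'$ for all $f\in\mathcal{K}(G)$. If $G$ (i.e. the pair $(G,1)$ with the trivial cocycle) has the $\mathcal{L}$-decay property with respect to $\|\cdot\|'$, then $(G,\sigma)$ has the $\mathcal{L}$-decay property with respect to $\|\cdot\|'$ for every normalized 2-cocycle $\sigma$.
   Context: $G$ is a discrete group with identity $e$, and $\sigma : G\times G \to \mathbb{T}$ is a normalized 2-cocycle, i.e. $\sigma(g,h)\sigma(gh,k)=\sigma(h,k)\sigma(g,hk)$ and $\sigma(g,e)=\sigma(e,g)=1$. $\Lambda_\sigma(g)$ is the unitary on $\ell^2(G)$ given by $(\Lambda_\sigma(g)\xi)(h)=\sigma(g,g^{-1}h)\xi(g^{-1}h)$; $\lambda=\Lambda_1$. $C^*_r(G,\sigma)$ is the operator-norm closed $*$-subalgebra of $B(\ell^2(G))$ generated by $\Lambda_\sigma(G)$. $\mathcal{K}(G)$ is the space of finitely supported complex functions on $G$; for $f\in\mathcal{K}(G)$, $\pi_\sigma(f)=\sum_{g}f(g)\Lambda_\sigma(g)$. For a finite $F\subseteq G$ and a function $\xi$, $\xi_F=\xi\chi_F$. If $\mathcal{L}\supseteq\mathcal{K}(G)$ is a subspace of $\ell^2(G)$ with a norm $\|\cdot\|'$, an element $\xi\in\mathcal{L}$ tends to $0$ at infinity w.r.t. $\|\cdot\|'$ if for every $\varepsilon>0$ there is a finite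 $F_0\subseteq G$ with $\|\xi_F\|'<\varepsilon$ for all finite $F$ disjoint from $F_0$. $(G,\sigma)$ has the $\mathcal{L}$-decay property w.r.t. $\|\cdot\|'$ if (i) every $\xi\in\mathcal{L}$ tends to $0$ at infinity w.r.t. $\|\cdot\|'$, and (ii) the map $f\mapsto\pi_\sigma(f)$ from $(\mathcal{K}(G),\|\cdot\|')$ to $(C^*_r(G,\sigma),\text{operator norm})$ is bounded. *)

theory Defs
  imports "HOL-Analysis.Analysis"
begin

text \<open>The discrete group G is modelled by a type 'g of class group_add,
  written additively: e = 0, gh = g + h, g^-1 = - g (no commutativity assumed).\<close>

definition normalized_2cocycle :: "('g::group_add \<Rightarrow> 'g \<Rightarrow> complex) \<Rightarrow> bool" where
  "normalized_2cocycle \<sigma> \<longleftrightarrow>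
     (\<forall>g h. cmod (\<sigma> g h) = 1) \<and>
     (\<forall>g h k. \<sigma> g h * \<sigma> (g + h) k = \<sigma> h k * \<sigma> g (h + k)) \<and>
     (\<forall>g. \<sigma> g 0 = 1 \<and> \<sigma> 0 g = 1)"

definition ell2 :: "('g \<Rightarrow> complex) set" where
  "ell2 = {\<xi>. (\<lambda>h. (cmod (\<xi> h))^2) summable_on UNIV}"

definition ell2_norm :: "('g \<Rightarrow> complex) \<Rightarrow> real" where
  "ell2_norm \<xi> = sqrt (\<Sum>\<^sub>\<infinity>h. (cmod (\<xi> h))^2)"

definition fin_supp :: "('g \<Rightarrow> complex) set" where
  "fin_supp = {f. finite {g. f g \<noteq> 0}}"

definition Lambda_tw :: "('g::group_add \<Rightarrow> 'g \<Rightarrow> complex) \<Rightarrow> 'g \<Rightarrow> ('g \<Rightarrow> complex) \<Rightarrow> ('g \<Rightarrow> complex)" where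
  "Lambda_tw \<sigma> g \<xi> = (\<lambda>h. \<sigma> g (- g + h) * \<xi> (- g + h))"

definition pi_tw :: "('g::group_add \<Rightarrow> 'g \<Rightarrow> complex) \<Rightarrow> ('g \<Rightarrow> complex) \<Rightarrow> ('g \<Rightarrow> complex) \<Rightarrow> ('g \<Rightarrow> complex)" where
  "pi_tw \<sigma> f \<xi> = (\<lambda>h. \<Sum>g\<in>{g. f g \<noteq> 0}. f g * Lambda_tw \<sigma> g \<xi> h)"

definition restr :: "('g \<Rightarrow> complex) \<Rightarrow> 'g set \<Rightarrow> ('g \<Rightarrow> complex)" where
  "restr \<xi> F = (\<lambda>h. if h \<in> F then \<xi> h else 0)"

definition linear_subspace :: "('g \<Rightarrow> complex) set \<Rightarrow> bool" where
  "linear_subspace L \<longleftrightarrow> (\<lambda>_. 0) \<in> L \<and> (\<forall>x\<in>L. \<forall>y\<in>L. (\<lambda>h. x h + y h) \<in> L)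
     \<and> (\<forall>c. \<forall>x\<in>L. (\<lambda>h. c * x h) \<in> L)"

definition norm_on :: "('g \<Rightarrow> complex) set \<Rightarrow> (('g \<Rightarrow> complex) \<Rightarrow> real) \<Rightarrow> bool" where
  "norm_on L N \<longleftrightarrow>
     (\<forall>x\<in>L. N x \<ge> 0) \<and> (\<forall>x\<in>L. N x = 0 \<longleftrightarrow> x = (\<lambda>_. 0)) \<and>
     (\<forall>c. \<forall>x\<in>L. N (\<lambda>h. c * x h) = cmod c * N x) \<and>
     (\<forall>x\<in>L. \<forall>y\<in>L. N (\<lambda>h. x h + y h) \<le> N x + N y)"

definition tends_to_zero_at_infinity :: "(('g \<Rightarrow> complex) \<Rightarrow> real) \<Rightarrow> ('g \<Rightarrow> complex) \<Rightarrow> bool" where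
  "tends_to_zero_at_infinity N \<xi> \<longleftrightarrow>
     (\<forall>\<epsilon>>0. \<exists>F0. finite F0 \<and> (\<forall>F. finite F \<and> F \<inter> F0 = {} \<longrightarrow> N (restr \<xi> F) < \<epsilon>))"

text \<open>Boundedness of f |-> pi_sigma(f) into operator norm on B(l^2(G)):
  ||pi_sigma(f) xi||_2 <= C ||f||' ||xi||_2 for all xi in l^2(G).\<close>
definition decay_property :: "('g::group_add \<Rightarrow> 'g \<Rightarrow> complex) \<Rightarrow> ('g \<Rightarrow> complex) set \<Rightarrow> (('g \<Rightarrow> complex) \<Rightarrow> real) \<Rightarrow> bool" where
  "decay_property \<sigma> L N \<longleftrightarrow>
     (\<forall>\<xi>\<in>L. tends_to_zero_at_infinity N \<xi>) \<and>
     (\<exists>C. \<forall>f\<in>fin_supp. \<forall>\<xi>\<in>ell2. ell2_norm (pi_tw \<sigma> f \<xi>) \<le> C * N f * ell2_norm \<xi>)"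

end

theory Submission
  imports Defs
begin

text \<open>Since the cocycle is unimodular, the twisted convolution is dominated pointwise by the
  untwisted one applied to absolute values:
  \<open>|\<pi>\<^sub>\<sigma>(f)\<xi>| \<le> \<lambda>(|f|)|\<xi>|\<close>. Hence the operator bound for the trivial cocycle transfers to
  \<open>\<sigma>\<close>, using that \<open>\<parallel>|f|\<parallel>' = \<parallel>f\<parallel>'\<close> and \<open>\<parallel>|\<xi>|\<parallel>\<^sub>2 = \<parallel>\<xi>\<parallel>\<^sub>2\<close>; the decay condition (i) does
  not involve the cocycle at all.\<close>

lemma summable_on_sum:
  fixes F :: "'b \<Rightarrow> 'a \<Rightarrow> real"
  assumes "finite S" "\<And>g. g \<in> S \<Longrightarrow> F g summable_on A"
  shows "(\<lambda>h. \<Sum>g\<in>S. F g h) summable_on A"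
  using assms by (induction S rule: finite_induct) (simp_all add: summable_on_add)

lemma ell2_mono:
  assumes "\<eta> \<in> ell2" and "\<And>h. cmod (\<xi> h) \<le> cmod (\<eta> h)"
  shows "\<xi> \<in> ell2"
  using assms unfolding ell2_def
  by (auto intro: summable_on_comparison_test power_mono)

lemma ell2_norm_mono:
  assumes "\<eta> \<in> ell2" and "\<And>h. cmod (\<xi> h) \<le> cmod (\<eta> h)"
  shows "ell2_norm \<xi> \<le> ell2_norm \<eta>"
proof -
  have "\<xi> \<in> ell2" using assms by (rule ell2_mono)
  then show ?thesis
    using assms unfolding ell2_norm_def ell2_def
    by (auto intro!: real_sqrt_le_mono infsum_mono power_mono)
qed

lemma ell2_abs: "\<xi> \<in> ell2 \<Longrightarrow> (\<lambda>h. complex_of_real (cmod (\<xi> h))) \<in> ell2"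
  by (simp add: ell2_def)

lemma ell2_norm_abs: "ell2_norm (\<lambda>h. complex_of_real (cmod (\<xi> h))) = ell2_norm \<xi>"
  by (simp add: ell2_norm_def)

lemma ell2_scale: "\<xi> \<in> ell2 \<Longrightarrow> (\<lambda>h. c * \<xi> h) \<in> ell2"
  unfolding ell2_def by (simp add: norm_mult power_mult_distrib summable_on_cmult_right)

lemma ell2_sum:
  assumes "finite S" and "\<And>g. g \<in> S \<Longrightarrow> x g \<in> ell2"
  shows "(\<lambda>h. \<Sum>g\<in>S. x g h) \<in> ell2"
proof -
  have "(\<lambda>h. (\<Sum>g\<in>S. (cmod (x g h))\<^sup>2) * card S) summable_on UNIV"
    using assms by (intro summable_on_cmult_left summable_on_sum) (auto simp: ell2_def)
  moreover have "(cmod (\<Sum>g\<in>S. x g h))\<^sup>2 \<le> (\<Sum>g\<in>S. (cmod (x g h))\<^sup>2) * card S" for h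
  proof -
    have "(cmod (\<Sum>g\<in>S. x g h))\<^sup>2 \<le> (\<Sum>g\<in>S. cmod (x g h))\<^sup>2"
      by (intro power_mono norm_sum) simp
    also have "\<dots> \<le> (\<Sum>g\<in>S. (cmod (x g h))\<^sup>2) * card S"
      by (rule sum_squared_le_sum_of_squares)
    finally show ?thesis .
  qed
  ultimately show ?thesis
    unfolding ell2_def mem_Collect_eq by (rule summable_on_comparison_test) simp_all
qed

lemma ell2_translate:
  fixes \<xi> :: "'g::group_add \<Rightarrow> complex"
  assumes "\<xi> \<in> ell2"
  shows "(\<lambda>h. \<xi> (- g + h)) \<in> ell2"
proof -
  have "bij_betw (\<lambda>h. - g + h) UNIV UNIV"
    by (rule bij_betwI[where g="\<lambda>h. g + h"]) (auto simp: add.assoc[symmetric])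
  then show ?thesis
    using assms by (simp add: ell2_def summable_on_reindex_bij_betw[where f="\<lambda>h. (cmod (\<xi> h))\<^sup>2"])
qed

lemma ell2_Lambda_tw:
  assumes "\<And>g h. cmod (\<sigma> g h) = 1" and "\<xi> \<in> ell2"
  shows "Lambda_tw \<sigma> g \<xi> \<in> ell2"
  by (rule ell2_mono[OF ell2_translate[OF assms(2), of g]])
    (simp add: Lambda_tw_def norm_mult assms(1))

lemma ell2_pi_tw:
  assumes "\<And>g h. cmod (\<sigma> g h) = 1" and "f \<in> fin_supp" and "\<xi> \<in> ell2"
  shows "pi_tw \<sigma> f \<xi> \<in> ell2"
  using assms unfolding pi_tw_def fin_supp_def
  by (intro ell2_sum ell2_scale ell2_Lambda_tw) auto

lemma norm_pi_tw_le_pi_tw_abs: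
  assumes "\<And>g h. cmod (\<sigma> g h) = 1"
  shows "cmod (pi_tw \<sigma> f \<xi> h)
    \<le> cmod (pi_tw (\<lambda>_ _. 1) (\<lambda>h. complex_of_real (cmod (f h)))
                              (\<lambda>h. complex_of_real (cmod (\<xi> h))) h)"
proof -
  define S where "S = {g. f g \<noteq> 0}"
  have "cmod (pi_tw \<sigma> f \<xi> h) \<le> (\<Sum>g\<in>S. cmod (f g * Lambda_tw \<sigma> g \<xi> h))"
    unfolding pi_tw_def S_def by (rule norm_sum)
  also have "\<dots> = (\<Sum>g\<in>S. cmod (f g) * cmod (\<xi> (- g + h)))"
    by (simp add: Lambda_tw_def norm_mult assms)
  also have "\<dots> = cmod (pi_tw (\<lambda>_ _. 1) (\<lambda>h. complex_of_real (cmod (f h)))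
                                       (\<lambda>h. complex_of_real (cmod (\<xi> h))) h)"
  proof -
    have "pi_tw (\<lambda>_ _. 1) (\<lambda>h. complex_of_real (cmod (f h)))
            (\<lambda>h. complex_of_real (cmod (\<xi> h))) h
          = complex_of_real (\<Sum>g\<in>S. cmod (f g) * cmod (\<xi> (- g + h)))"
      by (simp add: pi_tw_def Lambda_tw_def S_def)
    then show ?thesis by (simp only: norm_of_real) (simp add: sum_nonneg)
  qed
  finally show ?thesis .
qed

lemma ell2_norm_pi_tw_le_pi_tw_abs:
  assumes "\<And>g h. cmod (\<sigma> g h) = 1" and "f \<in> fin_supp" and "\<xi> \<in> ell2"
  shows "ell2_norm (pi_tw \<sigma> f \<xi>)
    \<le> ell2_norm (pi_tw (\<lambda>_ _. 1) (\<lambda>h. complex_of_real (cmod (f h)))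
                                  (\<lambda>h. complex_of_real (cmod (\<xi> h))))"
proof (rule ell2_norm_mono[OF ell2_pi_tw norm_pi_tw_le_pi_tw_abs[OF assms(1)]])
  show "(\<lambda>h. complex_of_real (cmod (f h))) \<in> fin_supp"
    using assms(2) by (simp add: fin_supp_def)
qed (use assms(3) in \<open>simp_all add: ell2_abs\<close>)

theorem proposition3p3:
  fixes L :: "('g::group_add \<Rightarrow> complex) set" and N :: "('g \<Rightarrow> complex) \<Rightarrow> real"
    and \<sigma> :: "'g \<Rightarrow> 'g \<Rightarrow> complex"
  assumes "linear_subspace L" and "L \<subseteq> ell2" and "fin_supp \<subseteq> L"
    and "norm_on L N"
    and "\<forall>f\<in>fin_supp. N (\<lambda>h. complex_of_real (cmod (f h))) = N f"
    and "decay_property (\<lambda>_ _. 1) L N"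
    and "normalized_2cocycle \<sigma>"
  shows "decay_property \<sigma> L N"
proof -
  obtain C where
    C: "\<forall>f\<in>fin_supp. \<forall>\<xi>\<in>ell2. ell2_norm (pi_tw (\<lambda>_ _. 1) f \<xi>) \<le> C * N f * ell2_norm \<xi>"
    and decay: "\<forall>\<xi>\<in>L. tends_to_zero_at_infinity N \<xi>"
    using assms(6) unfolding decay_property_def by blast
  have unimodular: "\<And>g h. cmod (\<sigma> g h) = 1"
    using assms(7) unfolding normalized_2cocycle_def by blast
  have "ell2_norm (pi_tw \<sigma> f \<xi>) \<le> C * N f * ell2_norm \<xi>"
    if f: "f \<in> fin_supp" and \<xi>: "\<xi> \<in> ell2" for f \<xi>
  proof -
    have abs_f: "(\<lambda>h. complex_of_real (cmod (f h))) \<in> fin_supp"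
      using f by (simp add: fin_supp_def)
    have "ell2_norm (pi_tw \<sigma> f \<xi>)
        \<le> ell2_norm (pi_tw (\<lambda>_ _. 1) (\<lambda>h. complex_of_real (cmod (f h)))
                                      (\<lambda>h. complex_of_real (cmod (\<xi> h))))"
      using unimodular f \<xi> by (rule ell2_norm_pi_tw_le_pi_tw_abs)
    also have "\<dots> \<le> C * N (\<lambda>h. complex_of_real (cmod (f h)))
                      * ell2_norm (\<lambda>h. complex_of_real (cmod (\<xi> h)))"
      using C abs_f ell2_abs[OF \<xi>] by blast
    also have "\<dots> = C * N f * ell2_norm \<xi>"
      using assms(5) f by (simp add: ell2_norm_abs)
    finally show ?thesis .
  qed
  then show ?thesis
    unfolding decay_property_def using decay by blast
qed

end
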